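(* For the one-dimensional Model I with parameter $\delta$, the expected number $\mathbb{E}[\tau]$ of consecutive traversals of the first edge satisfies $\mathbb{E}[\tau]\to\infty$ as $\delta\to0^+$, and more precisely $\mathbb{E}[\tau]$ is of order $|\log\delta|$: there exist constants $0<c\le C<\infty$ with $c|\log\delta|\le\mathbb{E}[\tau]\le C|\log\delta|$ for all sufficiently small $\delta>0$.
   Context: Model I on $\mathbb{Z}$ with parameter $\delta>0$: $S_0=0$, $S_1=\pm1$ with probability $1/2$ each. For $n\ge1$ let $e_n=\{S_{n-1},S_n\}$ and $m_n=\max\{k\ge1: e_{n-l+1}=e_n \text{ for all } 1\le l\le k\}$. Conditionally on $\sigma(S_0,\dots,S_n)$, the walk recrosses $e_n$ (i.e. $S_{n+1}=S_{n-1}$) with probability $\frac{1+m_n}{2+m_n}-\delta$ and otherwise crosses the other edge at $S_n$, with probability $\frac{1}{2+m_n}+\delta$. $\tau=\sup\{n\ge1: S_m\in\{0,S_1\}\ \text{for all } m\le n\}$. *)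

theory Defs
  imports "HOL-Probability.Probability"
begin

text \<open>Model I on the integers, realised on the canonical probability space of an
i.i.d. sequence of Uniform[0,1] variables: omega 0 decides the sign of S_1, and
omega n (n >= 1) decides whether step n+1 recrosses the current edge e_n
(namely iff omega n < (1+m_n)/(2+m_n) - delta).
The state at time n >= 1 is (S_(n-1), S_n, m_n).\<close>

fun modelI_state :: "real \<Rightarrow> (nat \<Rightarrow> real) \<Rightarrow> nat \<Rightarrow> int \<times> int \<times> nat" where
  "modelI_state \<delta> \<omega> 0 = (0, 0, 0)"
| "modelI_state \<delta> \<omega> (Suc 0) = (0, (if \<omega> 0 < 1/2 then 1 else -1), 1)"
| "modelI_state \<delta> \<omega> (Suc (Suc n)) =
     (case modelI_state \<delta> \<omega> (Suc n) of (p, c, m) \<Rightarrow>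
        if \<omega> (Suc n) < (1 + real m) / (2 + real m) - \<delta>
        then (c, p, Suc m)
        else (c, 2 * c - p, 1))"

definition modelI_S :: "real \<Rightarrow> (nat \<Rightarrow> real) \<Rightarrow> nat \<Rightarrow> int" where
  "modelI_S \<delta> \<omega> n = (if n = 0 then 0 else fst (snd (modelI_state \<delta> \<omega> n)))"

definition modelI_tau :: "real \<Rightarrow> (nat \<Rightarrow> real) \<Rightarrow> enat" where
  "modelI_tau \<delta> \<omega> =
     (SUP n \<in> {n. 1 \<le> n \<and> (\<forall>m\<le>n. modelI_S \<delta> \<omega> m \<in> {0, modelI_S \<delta> \<omega> 1})}. enat n)"

definition modelI_space :: "(nat \<Rightarrow> real) measure" where
  "modelI_space = PiM UNIV (\<lambda>_. uniform_measure lborel {0..1::real})"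

definition modelI_Etau :: "real \<Rightarrow> ennreal" where
  "modelI_Etau \<delta> = (\<integral>\<^sup>+ \<omega>. ennreal_of_enat (modelI_tau \<delta> \<omega>) \<partial>modelI_space)"

end

theory Submission
  imports Defs "HOL-Real_Asymp.Real_Asymp"
begin

text \<open>While the walk keeps recrossing its first edge, the run length m_n equals n, so
\<open>P(\<tau> > j) = \<Prod>k=1..j. ((1+k)/(2+k) - \<delta>)\<close>. Without the drift this product telescopes to
2/(j+2), and the drift multiplies it by a factor between \<open>(1 - 3\<delta>/2)^j\<close> and \<open>(1 - \<delta>)^j\<close>.
Summing over j, E[\<tau>] is squeezed between multiples of \<open>\<Sum> x^j/(j+1) = -ln(1-x)/x\<close>
with \<open>1 - x\<close> of order \<delta>, i.e. between multiples of |ln \<delta>|.\<close>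

definition recross_prob :: "real \<Rightarrow> nat \<Rightarrow> real" where
  "recross_prob \<delta> m = (1 + real m) / (2 + real m) - \<delta>"

definition stays_on_first_edge :: "real \<Rightarrow> (nat \<Rightarrow> real) \<Rightarrow> nat \<Rightarrow> bool" where
  "stays_on_first_edge \<delta> \<omega> n \<longleftrightarrow> (\<forall>k\<in>{1..<n}. \<omega> k < recross_prob \<delta> k)"

lemma stays_on_first_edge_mono:
  "stays_on_first_edge \<delta> \<omega> n \<Longrightarrow> m \<le> n \<Longrightarrow> stays_on_first_edge \<delta> \<omega> m"
  by (auto simp: stays_on_first_edge_def)

lemma modelI_state_on_first_edge:
  assumes "1 \<le> n" "stays_on_first_edge \<delta> \<omega> n"
  shows "modelI_state \<delta> \<omega> n =
     (if odd n then 0 else modelI_S \<delta> \<omega> 1, if odd n then modelI_S \<delta> \<omega> 1 else 0, n)"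
  using assms
proof (induction n rule: nat_induct_at_least)
  case base
  then show ?case by (simp add: modelI_S_def)
next
  case (Suc n)
  then obtain n' where n': "n = Suc n'" by (cases n) auto
  have "stays_on_first_edge \<delta> \<omega> n" using Suc.prems stays_on_first_edge_mono by force
  moreover have "\<omega> n < recross_prob \<delta> n" using Suc.prems Suc.hyps by (auto simp: stays_on_first_edge_def)
  ultimately show ?case using Suc.IH n' by (auto simp: recross_prob_def)
qed

lemma modelI_S_on_first_edge:
  "stays_on_first_edge \<delta> \<omega> n \<Longrightarrow> m \<le> n \<Longrightarrow> modelI_S \<delta> \<omega> m \<in> {0, modelI_S \<delta> \<omega> 1}"
  using modelI_state_on_first_edge[of m \<delta> \<omega>] stays_on_first_edge_mono[of \<delta> \<omega> n m]
  by (cases "m = 0") (auto simp: modelI_S_def)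

lemma modelI_S_leaves_first_edge:
  assumes "1 \<le> n" "stays_on_first_edge \<delta> \<omega> n" "\<not> \<omega> n < recross_prob \<delta> n"
  shows "modelI_S \<delta> \<omega> (Suc n) \<notin> {0, modelI_S \<delta> \<omega> 1}"
proof -
  obtain n' where "n = Suc n'" using assms(1) by (cases n) auto
  then show ?thesis using modelI_state_on_first_edge[OF assms(1,2)] assms(3)
    by (auto simp: modelI_S_def recross_prob_def)
qed

lemma on_first_edge_iff_stays:
  assumes "1 \<le> n"
  shows "(\<forall>m\<le>n. modelI_S \<delta> \<omega> m \<in> {0, modelI_S \<delta> \<omega> 1}) \<longleftrightarrow> stays_on_first_edge \<delta> \<omega> n"
  using assms
proof (induction n rule: nat_induct_at_least)
  case base
  then show ?case by (auto simp: stays_on_first_edge_def modelI_S_def le_Suc_eq)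
next
  case (Suc n)
  show ?case
  proof
    assume on_edge: "\<forall>m\<le>Suc n. modelI_S \<delta> \<omega> m \<in> {0, modelI_S \<delta> \<omega> 1}"
    then have stays: "stays_on_first_edge \<delta> \<omega> n" using Suc.IH by auto
    then have "\<omega> n < recross_prob \<delta> n"
      using modelI_S_leaves_first_edge[OF Suc.hyps] on_edge by blast
    with stays show "stays_on_first_edge \<delta> \<omega> (Suc n)"
      by (auto simp: stays_on_first_edge_def less_Suc_eq)
  qed (use modelI_S_on_first_edge in blast)
qed

lemma enat_less_modelI_tau_iff:
  "enat j < modelI_tau \<delta> \<omega> \<longleftrightarrow> stays_on_first_edge \<delta> \<omega> (Suc j)"
proof -
  have "{n. 1 \<le> n \<and> (\<forall>m\<le>n. modelI_S \<delta> \<omega> m \<in> {0, modelI_S \<delta> \<omega> 1})} =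
      {n. 1 \<le> n \<and> stays_on_first_edge \<delta> \<omega> n}"
    using on_first_edge_iff_stays by blast
  then have "enat j < modelI_tau \<delta> \<omega> \<longleftrightarrow> (\<exists>n. 1 \<le> n \<and> stays_on_first_edge \<delta> \<omega> n \<and> j < n)"
    unfolding modelI_tau_def less_SUP_iff by auto
  also have "\<dots> \<longleftrightarrow> stays_on_first_edge \<delta> \<omega> (Suc j)"
    using stays_on_first_edge_mono by (metis Suc_le_eq le_add1 lessI plus_1_eq_Suc)
  finally show ?thesis .
qed

lemma ennreal_of_enat_eq_suminf:
  "ennreal_of_enat x = (\<Sum>j. of_bool (enat j < x))"
proof (cases x)
  case (enat m)
  have "(\<Sum>j. of_bool (enat j < x)) = (\<Sum>j<m. of_bool (enat j < x) :: ennreal)"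
    by (rule suminf_finite) (auto simp: enat)
  then show ?thesis by (simp add: enat)
next
  case infinity
  have "(\<Sum>j. ennreal 1) = top"
    by (rule summable_iff_suminf_neq_top) (auto simp: summable_const_iff)
  then show ?thesis by (simp add: infinity)
qed

lemma lower_orthant_eq_prod_emb:
  "{\<omega>. \<forall>k\<in>J. \<omega> k < t k} =
     prod_emb UNIV (\<lambda>_. uniform_measure lborel {0..1}) J (Pi\<^sub>E J (\<lambda>k. {..<t k}))"
  by (auto simp: prod_emb_def space_PiM PiE_iff)

lemma sets_modelI_space_lower_orthant:
  "finite J \<Longrightarrow> {\<omega>. \<forall>k\<in>J. \<omega> k < t k} \<in> sets modelI_space"
  unfolding lower_orthant_eq_prod_emb modelI_space_def by (rule sets_PiM_I) auto

lemma emeasure_modelI_space_lower_orthant: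
  assumes "finite J" "\<And>k. k \<in> J \<Longrightarrow> 0 \<le> t k \<and> t k \<le> 1"
  shows "emeasure modelI_space {\<omega>. \<forall>k\<in>J. \<omega> k < t k} = ennreal (\<Prod>k\<in>J. t k)"
proof -
  have "emeasure modelI_space {\<omega>. \<forall>k\<in>J. \<omega> k < t k} =
      (\<Prod>k\<in>J. emeasure (uniform_measure lborel {0..1}) {..<t k})"
    unfolding lower_orthant_eq_prod_emb modelI_space_def
    using assms(1) by (intro emeasure_PiM_emb prob_space_uniform_measure) auto
  also have "\<dots> = (\<Prod>k\<in>J. ennreal (t k))"
  proof (intro prod.cong refl)
    fix k assume "k \<in> J"
    then have "{0..1} \<inter> {..<t k} = {0..<t k}" using assms(2)[of k] by auto
    then show "emeasure (uniform_measure lborel {0..1}) {..<t k} = ennreal (t k)"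
      using assms(2) \<open>k \<in> J\<close> by (simp add: divide_ennreal_def)
  qed
  also have "\<dots> = ennreal (\<Prod>k\<in>J. t k)"
    using assms(2) by (simp add: prod_ennreal)
  finally show ?thesis .
qed

lemma recross_prob_bounds:
  assumes "1 \<le> k" "0 \<le> \<delta>"
  shows "(1 + real k) / (2 + real k) * (1 - 3/2 * \<delta>) \<le> recross_prob \<delta> k"
    and "recross_prob \<delta> k \<le> (1 + real k) / (2 + real k) * (1 - \<delta>)"
proof -
  define a where "a = (1 + real k) / (2 + real k)"
  have "2/3 \<le> a" "a \<le> 1"
    using assms(1) by (auto simp: a_def field_simps)
  then have "\<delta> \<le> a * (3/2 * \<delta>)" "a * \<delta> \<le> \<delta>"
    using assms(2) mult_right_mono[of "2/3" a "3/2 * \<delta>"] mult_right_mono[of a 1 \<delta>] by auto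
  then show "a * (1 - 3/2 * \<delta>) \<le> recross_prob \<delta> k" "recross_prob \<delta> k \<le> a * (1 - \<delta>)"
    unfolding recross_prob_def a_def[symmetric] right_diff_distrib by auto
qed

lemma recross_prob_between_0_1:
  assumes "1 \<le> k" "0 \<le> \<delta>" "\<delta> \<le> 2/3"
  shows "0 \<le> recross_prob \<delta> k \<and> recross_prob \<delta> k \<le> 1"
proof -
  have a: "0 \<le> (1 + real k) / (2 + real k)" "(1 + real k) / (2 + real k) \<le> 1" by auto
  have "0 \<le> (1 + real k) / (2 + real k) * (1 - 3/2 * \<delta>)" using a assms by simp
  moreover have "(1 + real k) / (2 + real k) * (1 - \<delta>) \<le> 1" using a assms by (intro mult_le_one) auto
  ultimately show ?thesis using recross_prob_bounds[OF assms(1,2)] by linarith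
qed

definition stay_prob :: "real \<Rightarrow> nat \<Rightarrow> real" where
  "stay_prob \<delta> j = (\<Prod>k\<in>{1..j}. recross_prob \<delta> k)"

lemma modelI_Etau_eq_suminf_stay_prob:
  assumes "0 \<le> \<delta>" "\<delta> \<le> 2/3"
  shows "modelI_Etau \<delta> = (\<Sum>j. ennreal (stay_prob \<delta> j))"
proof -
  define A where "A j = {\<omega>. \<forall>k\<in>{1..j}. \<omega> k < recross_prob \<delta> k}" for j
  have A_sets: "A j \<in> sets modelI_space" for j
    unfolding A_def by (rule sets_modelI_space_lower_orthant) simp
  have "modelI_Etau \<delta> = (\<integral>\<^sup>+ \<omega>. (\<Sum>j. indicator (A j) \<omega>) \<partial>modelI_space)"
    unfolding modelI_Etau_def ennreal_of_enat_eq_suminf enat_less_modelI_tau_iff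
    by (simp add: A_def stays_on_first_edge_def indicator_def atLeastLessThanSuc_atLeastAtMost)
  also have "\<dots> = (\<Sum>j. emeasure modelI_space (A j))"
    using A_sets by (simp add: nn_integral_suminf)
  also have "\<dots> = (\<Sum>j. ennreal (stay_prob \<delta> j))"
    unfolding A_def stay_prob_def
    using recross_prob_between_0_1 assms by (subst emeasure_modelI_space_lower_orthant) auto
  finally show ?thesis .
qed

lemma prod_Suc_div_Suc_Suc: "(\<Prod>k\<in>{1..j}. (1 + real k) / (2 + real k)) = 2 / (real j + 2)"
  by (induction j) (simp_all add: prod.nat_ivl_Suc' field_simps)

lemma stay_prob_bounds:
  assumes "0 \<le> \<delta>" "\<delta> \<le> 2/3"
  shows "2 / (real j + 2) * (1 - 3/2 * \<delta>) ^ j \<le> stay_prob \<delta> j"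
    and "stay_prob \<delta> j \<le> 2 / (real j + 2) * (1 - \<delta>) ^ j"
proof -
  have "(\<Prod>k\<in>{1..j}. (1 + real k) / (2 + real k) * (1 - 3/2 * \<delta>)) \<le> stay_prob \<delta> j"
    unfolding stay_prob_def using assms recross_prob_bounds(1)
    by (intro prod_mono) auto
  then show "2 / (real j + 2) * (1 - 3/2 * \<delta>) ^ j \<le> stay_prob \<delta> j"
    by (simp only: prod.distrib prod_Suc_div_Suc_Suc prod_constant card_atLeastAtMost) simp
  have "stay_prob \<delta> j \<le> (\<Prod>k\<in>{1..j}. (1 + real k) / (2 + real k) * (1 - \<delta>))"
    unfolding stay_prob_def using assms recross_prob_bounds(2) recross_prob_between_0_1
    by (intro prod_mono) auto
  then show "stay_prob \<delta> j \<le> 2 / (real j + 2) * (1 - \<delta>) ^ j"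
    by (simp only: prod.distrib prod_Suc_div_Suc_Suc prod_constant card_atLeastAtMost) simp
qed

lemma sums_power_div_Suc:
  fixes x :: real
  assumes "\<bar>x\<bar> < 1" "x \<noteq> 0"
  shows "(\<lambda>n. x ^ n / real (Suc n)) sums (- ln (1 - x) / x)"
proof -
  have "(\<lambda>n. - ((-(-x)) ^ n) / real n) sums ln (1 + (-x))"
    by (rule ln_series') (use assms in auto)
  then have "(\<lambda>n. x ^ n / real n) sums (- ln (1 - x))"
    using sums_minus by fastforce
  then have "(\<lambda>n. x ^ Suc n / real (Suc n)) sums (- ln (1 - x))"
    by (subst sums_Suc_iff) simp
  then have "(\<lambda>n. x ^ Suc n / real (Suc n) / x) sums (- ln (1 - x) / x)"
    by (rule sums_divide)
  then show ?thesis using assms(2) by simp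
qed

lemma modelI_Etau_le_ln:
  assumes "0 < \<delta>" "\<delta> \<le> 1/2"
  shows "modelI_Etau \<delta> \<le> ennreal (4 * \<bar>ln \<delta>\<bar>)"
proof -
  have ln_nonneg: "0 \<le> - ln \<delta>" using assms by simp
  have "(\<lambda>j. (1 - \<delta>) ^ j / real (Suc j)) sums (- ln (1 - (1 - \<delta>)) / (1 - \<delta>))"
    using assms by (intro sums_power_div_Suc) auto
  then have sums: "(\<lambda>j. 2 * ((1 - \<delta>) ^ j / real (Suc j))) sums (2 * (- ln \<delta> / (1 - \<delta>)))"
    by (intro sums_mult) simp
  have "modelI_Etau \<delta> = (\<Sum>j. ennreal (stay_prob \<delta> j))"
    using assms by (intro modelI_Etau_eq_suminf_stay_prob) auto
  also have "\<dots> \<le> (\<Sum>j. ennreal (2 * ((1 - \<delta>) ^ j / real (Suc j))))"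
  proof (intro suminf_le summableI ennreal_leI)
    fix j
    have "stay_prob \<delta> j \<le> 2 / (real j + 2) * (1 - \<delta>) ^ j"
      using assms by (intro stay_prob_bounds) auto
    also have "\<dots> \<le> 2 / (real j + 1) * (1 - \<delta>) ^ j"
      using assms by (intro mult_right_mono divide_left_mono) auto
    finally show "stay_prob \<delta> j \<le> 2 * ((1 - \<delta>) ^ j / real (Suc j))" by (simp add: field_simps)
  qed
  also have "\<dots> = ennreal (2 * (- ln \<delta> / (1 - \<delta>)))"
    using assms by (intro suminf_ennreal_eq sums) auto
  also have "\<dots> \<le> ennreal (4 * \<bar>ln \<delta>\<bar>)"
    using assms ln_nonneg by (intro ennreal_leI) (auto simp: field_simps)
  finally show ?thesis .
qed

lemma modelI_Etau_ge_ln: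
  assumes "0 < \<delta>" "\<delta> \<le> exp (-1)"
  shows "ennreal (1/3 * \<bar>ln \<delta>\<bar>) \<le> modelI_Etau \<delta>"
proof -
  have ln_le: "ln \<delta> \<le> -1" using assms by (metis ln_exp ln_le_cancel_iff exp_gt_zero)
  have "exp (-1::real) \<le> 1/2"
    using exp_ge_add_one_self[of "1::real"] by (simp add: exp_minus field_simps)
  then have \<delta>: "0 < \<delta>" "\<delta> \<le> 1/2" using assms by auto
  define y where "y = 1 - 3/2 * \<delta>"
  have y: "0 < y" "y < 1" using \<delta> by (auto simp: y_def)
  have sums: "(\<lambda>j. 2/3 * (y ^ j / real (Suc j))) sums (2/3 * (- ln (1 - y) / y))"
    using y by (intro sums_mult sums_power_div_Suc) auto
  have "1 - y = 3/2 * \<delta>" by (simp add: y_def)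
  then have "ln (1 - y) = ln (3/2) + ln \<delta>"
    using \<delta> by (simp only: ln_mult) simp
  moreover have "ln (3/2::real) \<le> 1/2" using ln_le_minus_one[of "3/2::real"] by simp
  ultimately have half_ln: "1/2 * \<bar>ln \<delta>\<bar> \<le> - ln (1 - y)" using ln_le by linarith
  also have "\<dots> \<le> - ln (1 - y) / y"
    using y half_ln by (simp add: field_simps mult_left_le_one_le)
  finally have "ennreal (1/3 * \<bar>ln \<delta>\<bar>) \<le> ennreal (2/3 * (- ln (1 - y) / y))"
    by (intro ennreal_leI) linarith
  also have "\<dots> = (\<Sum>j. ennreal (2/3 * (y ^ j / real (Suc j))))"
    using y by (intro suminf_ennreal_eq[symmetric] sums) auto
  also have "\<dots> \<le> (\<Sum>j. ennreal (stay_prob \<delta> j))"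
  proof (intro suminf_le summableI ennreal_leI)
    fix j
    have "2/3 * (y ^ j / real (Suc j)) = 2 / (3 * real j + 3) * y ^ j" by (simp add: field_simps)
    also have "\<dots> \<le> 2 / (real j + 2) * y ^ j"
      using y by (intro mult_right_mono divide_left_mono) auto
    also have "\<dots> \<le> stay_prob \<delta> j"
      unfolding y_def using \<delta> by (intro stay_prob_bounds) auto
    finally show "2/3 * (y ^ j / real (Suc j)) \<le> stay_prob \<delta> j" .
  qed
  also have "\<dots> = modelI_Etau \<delta>"
    using \<delta> by (intro modelI_Etau_eq_suminf_stay_prob[symmetric]) auto
  finally show ?thesis .
qed

theorem mainTheorem3:
  shows "(modelI_Etau \<longlongrightarrow> \<infinity>) (at_right 0)
    \<and> (\<exists>c C::real. 0 < c \<and> c \<le> C \<and>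
         (\<forall>\<^sub>F \<delta> in at_right 0.
            ennreal (c * \<bar>ln \<delta>\<bar>) \<le> modelI_Etau \<delta> \<and>
            modelI_Etau \<delta> \<le> ennreal (C * \<bar>ln \<delta>\<bar>)))"
proof -
  have "\<forall>\<^sub>F \<delta> in at_right 0. 0 < \<delta> \<and> \<delta> \<le> exp (-1) \<and> \<delta> \<le> (1/2::real)"
    unfolding eventually_at_right_field by (intro exI[of _ "min (exp (-1)) (1/2)"]) auto
  then have bounds: "\<forall>\<^sub>F \<delta> in at_right 0.
      ennreal (1/3 * \<bar>ln \<delta>\<bar>) \<le> modelI_Etau \<delta> \<and> modelI_Etau \<delta> \<le> ennreal (4 * \<bar>ln \<delta>\<bar>)"
    by eventually_elim (blast intro: modelI_Etau_ge_ln modelI_Etau_le_ln)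
  have "LIM \<delta> at_right 0. 1/3 * \<bar>ln \<delta>\<bar> :> (at_top :: real filter)" by real_asymp
  then have "((\<lambda>\<delta>. ennreal (1/3 * \<bar>ln \<delta>\<bar>)) \<longlongrightarrow> \<infinity>) (at_right 0)"
    by (simp add: ennreal_tendsto_top_eq_at_top)
  moreover have "\<forall>\<^sub>F \<delta> in at_right 0. ennreal (1/3 * \<bar>ln \<delta>\<bar>) \<le> modelI_Etau \<delta>"
    using bounds by eventually_elim blast
  ultimately have "(modelI_Etau \<longlongrightarrow> \<infinity>) (at_right 0)"
    using tendsto_sandwich[of _ modelI_Etau _ "\<lambda>_. \<infinity>"] by (simp add: always_eventually)
  with bounds show ?thesis by (intro conjI exI[of _ "1/3"] exI[of _ "4::real"]) auto
qed

end
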